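(* Let $A$ be a PI-algebra over $F\in\{\mathbb{R},\mathbb{C}\}$. If $F\langle X\rangle$ is an MN-algebra, then $Id(A)$ is a closed ideal of $F\langle X\rangle$.
   Context: All algebras are non-unitary associative over $F$. $F\langle X\rangle$ is the free non-unitary associative algebra over $F$ on $X=\{x_1,x_2,\dots\}$. For $f=f(x_1,\dots,x_n)$, $f^{(d_1,\dots,d_n)}$ denotes its multihomogeneous component of multidegree $(d_1,\dots,d_n)$ (sum of terms whose monomials contain each $x_i$ exactly $d_i$ times). A norm on $F\langle X\rangle$ is multihomogeneous if $\|f^{(d_1,\dots,d_n)}\|\le\|f\|$ for all $f$ and all multidegrees; $F\langle X\rangle$ is an MN-algebra if it is a normed algebra ($\|fg\|\le\|f\|\|g\|$) for a multihomogeneous norm. $Id(A)$ is the set of $f(x_1,\dots,x_m)\in F\langle X\rangle$ with $f(a_1,\dots,a_m)=0$ for all $a_i\in A$; $A$ is a PI-algebra if $Id(A)\ne\{0\}$. Closed means closed in the norm topology. *)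

theory Defs
  imports Complex_Main
begin

text \<open>The base field F is either the reals or the complex numbers; we represent it as a
  subfield K of the complex numbers with K = range of_real or K = UNIV.\<close>

definition is_R_or_C :: "complex set \<Rightarrow> bool" where
  "is_R_or_C K \<longleftrightarrow> K = range complex_of_real \<or> K = UNIV"

text \<open>The free non-unitary associative algebra F<X> on X = {x_0, x_1, ...}:
  finitely supported coefficient functions on words (lists of variable indices),
  with coefficients in K and zero coefficient on the empty word.\<close>

definition freealg :: "complex set \<Rightarrow> (nat list \<Rightarrow> complex) set" where
  "freealg K = {f. finite {w. f w \<noteq> 0} \<and> f [] = 0 \<and> (\<forall>w. f w \<in> K)}"

definition fa_add :: "(nat list \<Rightarrow> complex) \<Rightarrow> (nat list \<Rightarrow> complex) \<Rightarrow> nat list \<Rightarrow> complex" where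
  "fa_add f g = (\<lambda>w. f w + g w)"

definition fa_smult :: "complex \<Rightarrow> (nat list \<Rightarrow> complex) \<Rightarrow> nat list \<Rightarrow> complex" where
  "fa_smult c f = (\<lambda>w. c * f w)"

definition fa_zero :: "nat list \<Rightarrow> complex" where
  "fa_zero = (\<lambda>w. 0)"

definition fa_mult :: "(nat list \<Rightarrow> complex) \<Rightarrow> (nat list \<Rightarrow> complex) \<Rightarrow> nat list \<Rightarrow> complex" where
  "fa_mult f g = (\<lambda>w. \<Sum>i\<in>{1..<length w}. f (take i w) * g (drop i w))"

definition fa_component :: "(nat \<Rightarrow> nat) \<Rightarrow> (nat list \<Rightarrow> complex) \<Rightarrow> nat list \<Rightarrow> complex" where
  "fa_component d f = (\<lambda>w. if (\<forall>i. count_list w i = d i) then f w else 0)"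

definition is_fa_norm :: "complex set \<Rightarrow> ((nat list \<Rightarrow> complex) \<Rightarrow> real) \<Rightarrow> bool" where
  "is_fa_norm K N \<longleftrightarrow>
     (\<forall>f\<in>freealg K. N f \<ge> 0 \<and> (N f = 0 \<longleftrightarrow> f = fa_zero)) \<and>
     (\<forall>c\<in>K. \<forall>f\<in>freealg K. N (fa_smult c f) = cmod c * N f) \<and>
     (\<forall>f\<in>freealg K. \<forall>g\<in>freealg K. N (fa_add f g) \<le> N f + N g)"

definition is_multihomogeneous_norm :: "complex set \<Rightarrow> ((nat list \<Rightarrow> complex) \<Rightarrow> real) \<Rightarrow> bool" where
  "is_multihomogeneous_norm K N \<longleftrightarrow> is_fa_norm K N \<and>
     (\<forall>f\<in>freealg K. \<forall>d. N (fa_component d f) \<le> N f)"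

definition is_MN_norm :: "complex set \<Rightarrow> ((nat list \<Rightarrow> complex) \<Rightarrow> real) \<Rightarrow> bool" where
  "is_MN_norm K N \<longleftrightarrow> is_multihomogeneous_norm K N \<and>
     (\<forall>f\<in>freealg K. \<forall>g\<in>freealg K. N (fa_mult f g) \<le> N f * N g)"

definition is_MN_algebra :: "complex set \<Rightarrow> bool" where
  "is_MN_algebra K \<longleftrightarrow> (\<exists>N. is_MN_norm K N)"

text \<open>An associative (possibly non-unital) algebra over K: a type of class ring
  (which in Isabelle is non-unital) with a K-scalar multiplication.\<close>
definition is_algebra_over :: "complex set \<Rightarrow> (complex \<Rightarrow> 'b::ring \<Rightarrow> 'b) \<Rightarrow> bool" where
  "is_algebra_over K sm \<longleftrightarrow>
     (\<forall>c\<in>K. \<forall>x y. sm c (x + y) = sm c x + sm c y) \<and>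
     (\<forall>c\<in>K. \<forall>d\<in>K. \<forall>x. sm (c + d) x = sm c x + sm d x) \<and>
     (\<forall>c\<in>K. \<forall>d\<in>K. \<forall>x. sm (c * d) x = sm c (sm d x)) \<and>
     (\<forall>x. sm 1 x = x) \<and>
     (\<forall>c\<in>K. \<forall>x y. sm c (x * y) = sm c x * y \<and> sm c (x * y) = x * sm c y)"

fun wprod :: "'b::ring list \<Rightarrow> 'b" where
  "wprod [] = 0"
| "wprod [x] = x"
| "wprod (x # y # ys) = x * wprod (y # ys)"

definition fa_eval :: "(complex \<Rightarrow> 'b::ring \<Rightarrow> 'b) \<Rightarrow> (nat list \<Rightarrow> complex) \<Rightarrow> (nat \<Rightarrow> 'b) \<Rightarrow> 'b" where
  "fa_eval sm f a = (\<Sum>w\<in>{w. f w \<noteq> 0}. sm (f w) (wprod (map a w)))"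

definition Id_alg :: "complex set \<Rightarrow> (complex \<Rightarrow> 'b::ring \<Rightarrow> 'b) \<Rightarrow> (nat list \<Rightarrow> complex) set" where
  "Id_alg K sm = {f \<in> freealg K. \<forall>a :: nat \<Rightarrow> 'b. fa_eval sm f a = 0}"

definition is_PI_algebra :: "complex set \<Rightarrow> (complex \<Rightarrow> 'b::ring \<Rightarrow> 'b) \<Rightarrow> bool" where
  "is_PI_algebra K sm \<longleftrightarrow> Id_alg K sm \<noteq> {fa_zero}"

definition is_fa_ideal :: "complex set \<Rightarrow> (nat list \<Rightarrow> complex) set \<Rightarrow> bool" where
  "is_fa_ideal K I \<longleftrightarrow> I \<subseteq> freealg K \<and> fa_zero \<in> I \<and>
     (\<forall>f\<in>I. \<forall>g\<in>I. fa_add f g \<in> I) \<and>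
     (\<forall>c\<in>K. \<forall>f\<in>I. fa_smult c f \<in> I) \<and>
     (\<forall>f\<in>I. \<forall>g\<in>freealg K. fa_mult g f \<in> I \<and> fa_mult f g \<in> I)"

definition is_fa_closed :: "complex set \<Rightarrow> ((nat list \<Rightarrow> complex) \<Rightarrow> real) \<Rightarrow> (nat list \<Rightarrow> complex) set \<Rightarrow> bool" where
  "is_fa_closed K N I \<longleftrightarrow>
     (\<forall>g\<in>freealg K. (\<forall>e>0. \<exists>f\<in>I. N (fa_add g (fa_smult (-1) f)) < e) \<longrightarrow> g \<in> I)"

end

theory Submission
  imports Defs "HOL-Analysis.Complex_Analysis_Basics" "HOL-Library.Multiset"
begin

text \<open>
  Evaluation at a point of A is an algebra homomorphism, so Id(A) is an ideal. Substituting
  t x_j for x_j multiplies the part of degree k in x_j by t^k; combining such substitutions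
  with t = 2 separates the degrees, so Id(A) contains all multihomogeneous components of its
  elements. A multihomogeneous component lives in the finite-dimensional space spanned by
  the words of a fixed multidegree, where every subspace is closed for any norm; since the
  norm does not increase under taking components, each component of a limit of identities
  is a limit of identities of that multidegree, hence an identity, and so is their sum.
\<close>

definition fa_restrict :: "(nat list \<Rightarrow> bool) \<Rightarrow> (nat list \<Rightarrow> complex) \<Rightarrow> nat list \<Rightarrow> complex" where
  "fa_restrict P f = (\<lambda>w. if P w then f w else 0)"

definition fa_supported :: "complex set \<Rightarrow> nat list set \<Rightarrow> (nat list \<Rightarrow> complex) set" where
  "fa_supported K S = {h \<in> freealg K. \<forall>w. w \<notin> S \<longrightarrow> h w = 0}"

definition fa_monomial :: "nat list \<Rightarrow> nat list \<Rightarrow> complex" where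
  "fa_monomial w0 = (\<lambda>w. if w = w0 then 1 else 0)"

definition fa_subspace :: "complex set \<Rightarrow> (nat list \<Rightarrow> complex) set \<Rightarrow> bool" where
  "fa_subspace K W \<longleftrightarrow> W \<subseteq> freealg K \<and> fa_zero \<in> W \<and>
     (\<forall>f\<in>W. \<forall>g\<in>W. fa_add f g \<in> W) \<and> (\<forall>c\<in>K. \<forall>f\<in>W. fa_smult c f \<in> W)"

abbreviation fa_diff :: "(nat list \<Rightarrow> complex) \<Rightarrow> (nat list \<Rightarrow> complex) \<Rightarrow> nat list \<Rightarrow> complex" where
  "fa_diff f g \<equiv> fa_add f (fa_smult (-1) g)"

lemma fa_add_apply [simp]: "fa_add f g w = f w + g w"
  by (simp add: fa_add_def)

lemma fa_smult_apply [simp]: "fa_smult c f w = c * f w"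
  by (simp add: fa_smult_def)

lemma fa_zero_apply [simp]: "fa_zero w = 0"
  by (simp add: fa_zero_def)

lemma fa_restrict_apply [simp]: "fa_restrict P f w = (if P w then f w else 0)"
  by (simp add: fa_restrict_def)

lemma fa_supported_remove:
  "f \<in> fa_supported K (insert w0 S) \<Longrightarrow> f w0 = 0 \<Longrightarrow> f \<in> fa_supported K S"
  by (auto simp: fa_supported_def)

lemma fa_component_eq_restrict: "fa_component d f = fa_restrict (\<lambda>w. count_list w = d) f"
  by (auto simp: fa_component_def fun_eq_iff)

lemma finite_multidegree_class: "finite {w :: nat list. count_list w = d}"
proof (cases "\<exists>w0. count_list w0 = d")
  case True
  then obtain w0 where d: "d = count_list w0" by auto
  have "{w. count_list w = d} \<subseteq> {w. set w \<subseteq> set w0 \<and> length w = length w0}"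
  proof
    fix w assume "w \<in> {w. count_list w = d}"
    then have "mset w = mset w0" by (auto intro!: multiset_eqI simp: count_mset d)
    then show "w \<in> {w. set w \<subseteq> set w0 \<and> length w = length w0}"
      by (auto dest: mset_eq_setD mset_eq_length)
  qed
  then show ?thesis by (rule finite_subset) (simp add: finite_lists_length_eq)
qed simp

lemma two_power_eq_iff: "(2::complex) ^ k = 2 ^ m \<longleftrightarrow> k = m"
proof -
  have "(2::complex) ^ k = of_nat (2 ^ k)" "(2::complex) ^ m = of_nat (2 ^ m)" by simp_all
  then show ?thesis by (metis of_nat_eq_iff power_inject_exp one_less_numeral_iff semiring_norm(76))
qed

lemma Cauchy_if_dist_le:
  fixes X :: "nat \<Rightarrow> 'a::metric_space"
  assumes dist: "\<And>m n. dist (X m) (X n) \<le> a m + a n" and a: "a \<longlonglongrightarrow> 0"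
  shows "Cauchy X"
proof (rule metric_CauchyI)
  fix e :: real assume "e > 0"
  then have "eventually (\<lambda>n. a n < e / 2) sequentially"
    using a by (intro order_tendstoD(2)) auto
  then obtain M where M: "\<And>n. n \<ge> M \<Longrightarrow> a n < e / 2"
    by (auto simp: eventually_sequentially)
  have "dist (X m) (X n) < e" if "m \<ge> M" "n \<ge> M" for m n
    using M[OF that(1)] M[OF that(2)] dist[of m n] by linarith
  then show "\<exists>M. \<forall>m\<ge>M. \<forall>n\<ge>M. dist (X m) (X n) < e" by blast
qed

text \<open>Each pair (u, v) is recovered from the splitting of u @ v at position length u.\<close>

lemma sum_splittings_eq_sum_pairs:
  fixes F :: "nat list \<Rightarrow> nat list \<Rightarrow> 'a::comm_monoid_add"
  assumes "finite U" "finite V" "[] \<notin> U" "[] \<notin> V"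
  shows "(\<Sum>w\<in>(\<lambda>(u, v). u @ v) ` (U \<times> V). \<Sum>i\<in>{1..<length w}.
           if take i w \<in> U \<and> drop i w \<in> V then F (take i w) (drop i w) else 0)
       = (\<Sum>(u, v)\<in>U \<times> V. F u v)"
proof -
  define T where "T = (\<lambda>(u, v). u @ v) ` (U \<times> V)"
  define cuts where "cuts w = {1..<length w}" for w :: "nat list"
  define H where "H = (\<lambda>(w, i). if take i w \<in> U \<and> drop i w \<in> V
                                 then F (take i w) (drop i w) else 0)"
  define concat_cut where "concat_cut = (\<lambda>(u :: nat list, v :: nat list). (u @ v, length u))"
  have T: "finite T" using assms by (simp add: T_def)
  have "(\<Sum>w\<in>T. \<Sum>i\<in>cuts w. H (w, i)) = (\<Sum>x\<in>Sigma T cuts. H x)"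
    using T by (subst sum.Sigma) (auto simp: cuts_def)
  also have "\<dots> = (\<Sum>x\<in>concat_cut ` (U \<times> V). H x)"
  proof (rule sum.mono_neutral_right)
    show "finite (Sigma T cuts)" using T by (auto simp: cuts_def)
    show "concat_cut ` (U \<times> V) \<subseteq> Sigma T cuts"
      using assms(3,4) by (fastforce simp: concat_cut_def T_def cuts_def Suc_le_eq)
    show "\<forall>x\<in>Sigma T cuts - concat_cut ` (U \<times> V). H x = 0"
    proof
      fix x assume x: "x \<in> Sigma T cuts - concat_cut ` (U \<times> V)"
      then obtain w i where wi: "x = (w, i)" "i < length w" by (auto simp: cuts_def)
      have "take i w \<notin> U \<or> drop i w \<notin> V"
      proof (rule ccontr)
        assume "\<not> ?thesis"
        then have "x \<in> concat_cut ` (U \<times> V)"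
          using wi by (intro image_eqI[of _ _ "(take i w, drop i w)"]) (auto simp: concat_cut_def)
        then show False using x by blast
      qed
      then show "H x = 0" by (auto simp: wi H_def)
    qed
  qed
  also have "\<dots> = (\<Sum>(u, v)\<in>U \<times> V. F u v)"
    by (subst sum.reindex) (auto simp: concat_cut_def inj_on_def H_def intro!: sum.cong)
  finally show ?thesis by (simp add: T_def cuts_def H_def)
qed

locale R_or_C_coeffs =
  fixes K :: "complex set"
  assumes R_or_C: "is_R_or_C K"
begin

lemma K_cases: "K = \<real> \<or> K = UNIV"
  using R_or_C by (auto simp: is_R_or_C_def Reals_def)

lemma K_closed_under [simp]:
  "0 \<in> K" "1 \<in> K" "numeral m \<in> K"
  "a \<in> K \<Longrightarrow> - a \<in> K"
  "a \<in> K \<Longrightarrow> b \<in> K \<Longrightarrow> a + b \<in> K"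
  "a \<in> K \<Longrightarrow> b \<in> K \<Longrightarrow> a - b \<in> K"
  "a \<in> K \<Longrightarrow> b \<in> K \<Longrightarrow> a * b \<in> K"
  "a \<in> K \<Longrightarrow> b \<in> K \<Longrightarrow> a / b \<in> K"
  "a \<in> K \<Longrightarrow> a ^ n \<in> K"
  using K_cases by auto

lemma K_closed_sum [simp]: "(\<And>i. i \<in> A \<Longrightarrow> f i \<in> K) \<Longrightarrow> sum f A \<in> K"
  by (induction A rule: infinite_finite_induct) auto

lemma closed_K: "closed K"
  using K_cases closed_complex_Reals by auto

lemma freealgD:
  assumes "f \<in> freealg K"
  shows "finite {w. f w \<noteq> 0}" "f [] = 0" "f w \<in> K"
  using assms by (auto simp: freealg_def)

lemma freealg_if_support_subset:
  assumes "finite S" "\<And>w. w \<notin> S \<Longrightarrow> f w = 0" "f [] = 0" "\<And>w. f w \<in> K"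
  shows "f \<in> freealg K"
  using assms by (auto simp: freealg_def intro: finite_subset[of _ S])

lemma fa_zero_in [simp]: "fa_zero \<in> freealg K"
  by (auto simp: freealg_def)

lemma fa_add_in [simp]: "f \<in> freealg K \<Longrightarrow> g \<in> freealg K \<Longrightarrow> fa_add f g \<in> freealg K"
  by (rule freealg_if_support_subset[of "{w. f w \<noteq> 0} \<union> {w. g w \<noteq> 0}"])
    (auto simp: freealgD)

lemma fa_smult_in [simp]: "c \<in> K \<Longrightarrow> f \<in> freealg K \<Longrightarrow> fa_smult c f \<in> freealg K"
  by (rule freealg_if_support_subset[of "{w. f w \<noteq> 0}"]) (auto simp: freealgD)

lemma fa_restrict_in [simp]: "f \<in> freealg K \<Longrightarrow> fa_restrict P f \<in> freealg K"
  by (rule freealg_if_support_subset[of "{w. f w \<noteq> 0}"]) (auto simp: freealgD)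

lemma fa_monomial_in: "w0 \<noteq> [] \<Longrightarrow> fa_monomial w0 \<in> freealg K"
  by (rule freealg_if_support_subset[of "{w0}"]) (auto simp: fa_monomial_def)

lemma fa_mult_support:
  assumes "fa_mult f g w \<noteq> 0"
  shows "w \<in> (\<lambda>(u, v). u @ v) ` ({u. f u \<noteq> 0} \<times> {v. g v \<noteq> 0})"
proof -
  from assms obtain i where "i \<in> {1..<length w}" "f (take i w) * g (drop i w) \<noteq> 0"
    unfolding fa_mult_def by (meson sum.not_neutral_contains_not_neutral)
  then show ?thesis by (intro image_eqI[of _ _ "(take i w, drop i w)"]) auto
qed

lemma fa_mult_in [simp]:
  assumes "f \<in> freealg K" "g \<in> freealg K"
  shows "fa_mult f g \<in> freealg K"
  using assms fa_mult_support
  by (intro freealg_if_support_subset[of "(\<lambda>(u, v). u @ v) ` ({u. f u \<noteq> 0} \<times> {v. g v \<noteq> 0})"])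
    (auto simp: freealgD fa_mult_def)

lemma fa_subspace_supported: "fa_subspace K (fa_supported K S)"
  by (auto simp: fa_subspace_def fa_supported_def)

lemma fa_subspace_Int: "fa_subspace K V \<Longrightarrow> fa_subspace K W \<Longrightarrow> fa_subspace K (V \<inter> W)"
  by (auto simp: fa_subspace_def)

lemma fa_subspace_coeff_kernel: "fa_subspace K W \<Longrightarrow> fa_subspace K {f \<in> W. f w0 = 0}"
  by (auto simp: fa_subspace_def)

lemma fa_subspace_if_fa_ideal: "is_fa_ideal K I \<Longrightarrow> fa_subspace K I"
  by (auto simp: fa_subspace_def is_fa_ideal_def)

lemma fa_subspace_restrict_partition:
  assumes W: "fa_subspace K W" and f: "f \<in> freealg K"
    and pieces: "\<And>d. fa_restrict (\<lambda>w. \<phi> w = d) f \<in> W"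
  shows "f \<in> W"
proof -
  have "fa_restrict (\<lambda>w. \<phi> w \<in> D) f \<in> W" if "finite D" for D
    using that
  proof (induction D rule: finite_induct)
    case empty
    then show ?case using W by (simp add: fa_subspace_def fa_restrict_def fa_zero_def)
  next
    case (insert d D)
    have "fa_restrict (\<lambda>w. \<phi> w \<in> insert d D) f =
          fa_add (fa_restrict (\<lambda>w. \<phi> w = d) f) (fa_restrict (\<lambda>w. \<phi> w \<in> D) f)"
      using insert.hyps(2) by (auto simp: fun_eq_iff)
    moreover have "fa_add (fa_restrict (\<lambda>w. \<phi> w = d) f) (fa_restrict (\<lambda>w. \<phi> w \<in> D) f) \<in> W"
      using W pieces insert.IH unfolding fa_subspace_def by blast
    ultimately show ?case by (simp only:)
  qed
  moreover have "f = fa_restrict (\<lambda>w. \<phi> w \<in> \<phi> ` {w. f w \<noteq> 0}) f"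
    by (auto simp: fun_eq_iff)
  ultimately show ?thesis using f freealgD(1) by (metis finite_imageI)
qed

end

locale fa_normed = R_or_C_coeffs +
  fixes N :: "(nat list \<Rightarrow> complex) \<Rightarrow> real"
  assumes norm: "is_fa_norm K N"
begin

lemma N_nonneg: "f \<in> freealg K \<Longrightarrow> N f \<ge> 0"
  using norm by (auto simp: is_fa_norm_def)

lemma N_eq_0_iff: "f \<in> freealg K \<Longrightarrow> N f = 0 \<longleftrightarrow> f = fa_zero"
  using norm by (auto simp: is_fa_norm_def)

lemma N_smult: "c \<in> K \<Longrightarrow> f \<in> freealg K \<Longrightarrow> N (fa_smult c f) = cmod c * N f"
  using norm by (auto simp: is_fa_norm_def)

lemma N_add_le: "f \<in> freealg K \<Longrightarrow> g \<in> freealg K \<Longrightarrow> N (fa_add f g) \<le> N f + N g"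
  using norm by (auto simp: is_fa_norm_def)

lemma N_diff_commute:
  assumes "f \<in> freealg K" "g \<in> freealg K"
  shows "N (fa_diff f g) = N (fa_diff g f)"
proof -
  have "fa_diff g f = fa_smult (-1) (fa_diff f g)" by (rule ext) simp
  then show ?thesis using assms by (simp add: N_smult)
qed

lemma N_diff_triangle:
  assumes "f \<in> freealg K" "g \<in> freealg K" "h \<in> freealg K"
  shows "N (fa_diff f h) \<le> N (fa_diff f g) + N (fa_diff g h)"
proof -
  have "fa_diff f h = fa_add (fa_diff f g) (fa_diff g h)" by (rule ext) simp
  then show ?thesis using N_add_le[of "fa_diff f g" "fa_diff g h"] assms by simp
qed

text \<open>If the coefficient at w0 were not bounded by the norm, normalising elements with a large
  coefficient would approximate the monomial w0 by elements supported in S.\<close>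

lemma coeff_bound_if_closed:
  assumes closed: "is_fa_closed K N (fa_supported K S)" and "w0 \<notin> S"
  shows "\<exists>C. \<forall>h\<in>fa_supported K (insert w0 S). cmod (h w0) \<le> C * N h"
proof (cases "w0 = []")
  case True
  then show ?thesis by (auto simp: fa_supported_def freealgD intro!: exI[of _ 0])
next
  case False
  show ?thesis
  proof (rule ccontr)
    assume unbounded: "\<not> ?thesis"
    have "\<exists>f\<in>fa_supported K S. N (fa_diff (fa_monomial w0) f) < e" if e: "e > 0" for e
    proof -
      obtain h where "h \<in> fa_supported K (insert w0 S)" "cmod (h w0) > (1 / e) * N h"
        using unbounded by (meson not_le)
      then have h: "h \<in> fa_supported K (insert w0 S)" "e * cmod (h w0) > N h"
        using e by (auto simp: field_simps)
      have hf: "h \<in> freealg K" using h(1) by (simp add: fa_supported_def)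
      have "h w0 \<noteq> 0" using h(2) N_nonneg[OF hf] by auto
      define k where "k = fa_smult (1 / h w0) h"
      have kf: "k \<in> freealg K" using hf by (simp add: k_def freealgD)
      have "N k = N h / cmod (h w0)"
        using hf by (simp add: k_def N_smult freealgD norm_divide)
      also have "\<dots> < e" using h(2) \<open>h w0 \<noteq> 0\<close> by (simp add: divide_less_eq mult.commute)
      finally have "N k < e" .
      have "fa_diff (fa_monomial w0) k \<in> fa_supported K S"
        using h(1) kf fa_monomial_in[OF False] \<open>h w0 \<noteq> 0\<close>
        by (auto simp: fa_supported_def fa_monomial_def k_def)
      moreover have "fa_diff (fa_monomial w0) (fa_diff (fa_monomial w0) k) = k"
        by (rule ext) simp
      ultimately show ?thesis using \<open>N k < e\<close> by metis
    qed
    then have "fa_monomial w0 \<in> fa_supported K S"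
      using closed fa_monomial_in[OF False] unfolding is_fa_closed_def by blast
    then show False using assms(2) by (auto simp: fa_supported_def fa_monomial_def)
  qed
qed

text \<open>The coefficients at w0 of approximants of g converge to some c, and g - c u is then
  approximated by elements of the kernel.\<close>

lemma closed_if_closed_coeff_kernel:
  assumes W: "fa_subspace K W" and u: "u \<in> W" "u w0 = 1"
    and bound: "\<forall>f\<in>W. cmod (f w0) \<le> C * N f"
    and kernel_closed: "is_fa_closed K N {f \<in> W. f w0 = 0}"
  shows "is_fa_closed K N W"
  unfolding is_fa_closed_def
proof (intro ballI impI)
  fix g assume g: "g \<in> freealg K" and approx: "\<forall>e>0. \<exists>f\<in>W. N (fa_diff g f) < e"
  have WK: "f \<in> freealg K" if "f \<in> W" for f using W that by (auto simp: fa_subspace_def)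
  have uK: "u \<in> freealg K" using WK u(1) .
  have "1 \<le> C * N u" using bound u by force
  then have C: "C \<ge> 0" using N_nonneg[OF uK] by (smt (verit) mult_nonpos_nonneg)
  have "\<forall>n. \<exists>f\<in>W. N (fa_diff g f) < 1 / Suc n" using approx by simp
  then obtain f where f: "\<And>n. f n \<in> W" "\<And>n. N (fa_diff g (f n)) < 1 / Suc n" by metis
  have fK: "f n \<in> freealg K" for n using WK f(1) .
  have "dist (f m w0) (f n w0) \<le> C / Suc m + C / Suc n" for m n
  proof -
    have "fa_diff (f m) (f n) \<in> W" using W f(1) by (simp add: fa_subspace_def)
    then have "dist (f m w0) (f n w0) \<le> C * N (fa_diff (f m) (f n))"
      using bound by (auto simp: dist_norm)
    also have "\<dots> \<le> C * (N (fa_diff g (f m)) + N (fa_diff g (f n)))"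
      using N_diff_triangle[OF fK g fK] N_diff_commute[OF g fK] C
      by (metis mult_left_mono)
    also have "\<dots> \<le> C * (1 / Suc m) + C * (1 / Suc n)"
      unfolding distrib_left using f(2)[of m] f(2)[of n] C
      by (intro add_mono mult_left_mono) auto
    finally show ?thesis by simp
  qed
  moreover have "(\<lambda>n. C / Suc n) \<longlonglongrightarrow> 0"
    using tendsto_mult_right_zero[OF LIMSEQ_inverse_real_of_nat, of C]
    by (simp add: divide_inverse)
  ultimately have "Cauchy (\<lambda>n. f n w0)" by (rule Cauchy_if_dist_le)
  then obtain c where lim: "(\<lambda>n. f n w0) \<longlonglongrightarrow> c"
    by (auto simp: Cauchy_convergent_iff convergent_def)
  have cK: "c \<in> K"
    using closed_sequentially[OF closed_K _ lim] fK freealgD(3) by blast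
  define g' where "g' = fa_diff g (fa_smult c u)"
  have g'K: "g' \<in> freealg K" using g uK cK by (simp add: g'_def)
  define p where "p n = fa_diff (f n) (fa_smult (f n w0) u)" for n
  have p: "p n \<in> {f \<in> W. f w0 = 0}" for n
    using W f(1) u fK freealgD(3) by (simp add: p_def fa_subspace_def)
  have "\<exists>f\<in>{f \<in> W. f w0 = 0}. N (fa_diff g' f) < e" if "e > 0" for e
  proof -
    have bound_n: "N (fa_diff g' (p n)) \<le> 1 / Suc n + cmod (f n w0 - c) * N u" for n
    proof -
      have "fa_diff g' (p n) = fa_add (fa_diff g (f n)) (fa_smult (f n w0 - c) u)"
        by (rule ext) (simp add: g'_def p_def algebra_simps)
      moreover have "f n w0 - c \<in> K" using freealgD(3)[OF fK] cK by simp
      ultimately have "N (fa_diff g' (p n)) \<le> N (fa_diff g (f n)) + cmod (f n w0 - c) * N u"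
        using N_add_le[of "fa_diff g (f n)" "fa_smult (f n w0 - c) u"] N_smult[of "f n w0 - c" u]
          g fK uK by simp
      then show ?thesis using f(2)[of n] by simp
    qed
    have "(\<lambda>n. 1 / Suc n + cmod (f n w0 - c) * N u) \<longlonglongrightarrow> 0 + 0 * N u"
      using LIMSEQ_inverse_real_of_nat lim
      by (intro tendsto_intros) (simp_all add: inverse_eq_divide LIM_zero tendsto_norm_zero)
    then have "eventually (\<lambda>n. 1 / Suc n + cmod (f n w0 - c) * N u < e) sequentially"
      using that by (intro order_tendstoD(2)) auto
    then obtain n where "1 / Suc n + cmod (f n w0 - c) * N u < e"
      using eventually_happens'[OF sequentially_bot] by blast
    then show ?thesis using p bound_n by (meson order.strict_trans1)
  qed
  then have "g' \<in> W"
    using kernel_closed g'K unfolding is_fa_closed_def by blast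
  moreover have "g = fa_add g' (fa_smult c u)" by (rule ext) (simp add: g'_def)
  ultimately show "g \<in> W" using W u(1) cK by (simp add: fa_subspace_def)
qed

text \<open>In the induction step either W vanishes at the new word w0, or W contains some u with
  u w0 = 1 and closedness reduces to that of the kernel of the coefficient at w0.\<close>

lemma fa_subspace_closed_if_finite_support:
  assumes "finite S" and "fa_subspace K W" and "W \<subseteq> fa_supported K S"
  shows "is_fa_closed K N W"
  using assms
proof (induction S arbitrary: W rule: finite_induct)
  case empty
  then have "W \<subseteq> {fa_zero}" by (auto simp: fa_supported_def fun_eq_iff)
  show ?case unfolding is_fa_closed_def
  proof (intro ballI impI)
    fix g assume g: "g \<in> freealg K" and "\<forall>e>0. \<exists>f\<in>W. N (fa_diff g f) < e"
    moreover have "fa_diff g fa_zero = g" by (rule ext) simp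
    ultimately have "N g < e" if "e > 0" for e
      using that \<open>W \<subseteq> {fa_zero}\<close> by force
    then have "g = fa_zero"
      using N_eq_0_iff[OF g] N_nonneg[OF g] by (metis less_le not_less)
    then show "g \<in> W" using empty.prems by (simp add: fa_subspace_def)
  qed
next
  case (insert w0 S)
  obtain C where C: "\<forall>h\<in>fa_supported K (insert w0 S). cmod (h w0) \<le> C * N h"
    using coeff_bound_if_closed[OF insert.IH[OF fa_subspace_supported order_refl] insert.hyps(2)]
    by blast
  show ?case
  proof (cases "\<exists>u0\<in>W. u0 w0 \<noteq> 0")
    case False
    then have "W \<subseteq> fa_supported K S"
      using insert.prems(2) fa_supported_remove by blast
    then show ?thesis using insert.IH insert.prems(1) by blast
  next
    case True
    then obtain u0 where u0: "u0 \<in> W" "u0 w0 \<noteq> 0" by blast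
    define u where "u = fa_smult (1 / u0 w0) u0"
    have "u \<in> W" using insert.prems(1) u0 freealgD(3)
      by (auto simp: u_def fa_subspace_def)
    moreover have "u w0 = 1" using u0(2) by (simp add: u_def)
    moreover have "is_fa_closed K N {f \<in> W. f w0 = 0}"
      using insert.IH fa_subspace_coeff_kernel[OF insert.prems(1)]
        insert.prems(2) fa_supported_remove by blast
    ultimately show ?thesis
      using closed_if_closed_coeff_kernel insert.prems C by blast
  qed
qed

end

definition fa_scale_var :: "nat \<Rightarrow> complex \<Rightarrow> (nat list \<Rightarrow> complex) \<Rightarrow> nat list \<Rightarrow> complex" where
  "fa_scale_var j t f = (\<lambda>w. t ^ count_list w j * f w)"

locale fa_algebra = R_or_C_coeffs +
  fixes sm :: "complex \<Rightarrow> 'b::ring \<Rightarrow> 'b"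
  assumes algebra: "is_algebra_over K sm"
begin

lemma sm_add_right: "c \<in> K \<Longrightarrow> sm c (x + y) = sm c x + sm c y"
  using algebra by (auto simp: is_algebra_over_def)

lemma sm_add_left: "c \<in> K \<Longrightarrow> d \<in> K \<Longrightarrow> sm (c + d) x = sm c x + sm d x"
  using algebra by (auto simp: is_algebra_over_def)

lemma sm_mult: "c \<in> K \<Longrightarrow> d \<in> K \<Longrightarrow> sm (c * d) x = sm c (sm d x)"
  using algebra by (auto simp: is_algebra_over_def)

lemma sm_times_left: "c \<in> K \<Longrightarrow> sm c (x * y) = sm c x * y"
  using algebra by (auto simp: is_algebra_over_def)

lemma sm_times_right: "c \<in> K \<Longrightarrow> sm c (x * y) = x * sm c y"
  using algebra unfolding is_algebra_over_def by blast

lemma sm_one [simp]: "sm 1 x = x"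
  using algebra by (simp add: is_algebra_over_def)

lemma sm_zero_left [simp]: "sm 0 x = 0"
  using sm_add_left[of 0 0 x] by simp

lemma sm_zero_right [simp]: "c \<in> K \<Longrightarrow> sm c 0 = 0"
  using sm_add_right[of c 0 0] by simp

lemma sm_sum_right: "c \<in> K \<Longrightarrow> sm c (\<Sum>i\<in>A. x i) = (\<Sum>i\<in>A. sm c (x i))"
  by (induction A rule: infinite_finite_induct) (auto simp: sm_add_right)

lemma sm_sum_left: "(\<And>i. i \<in> A \<Longrightarrow> c i \<in> K) \<Longrightarrow> sm (\<Sum>i\<in>A. c i) x = (\<Sum>i\<in>A. sm (c i) x)"
  by (induction A rule: infinite_finite_induct) (auto simp: sm_add_left)

lemma wprod_append: "u \<noteq> [] \<Longrightarrow> v \<noteq> [] \<Longrightarrow> wprod (u @ v) = wprod u * wprod v"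
proof (induction u rule: wprod.induct)
  case (2 x)
  then show ?case by (cases v) auto
qed (simp_all add: mult.assoc)

lemma fa_eval_superset:
  assumes "finite T" "{w. f w \<noteq> 0} \<subseteq> T"
  shows "fa_eval sm f a = (\<Sum>w\<in>T. sm (f w) (wprod (map a w)))"
  unfolding fa_eval_def by (rule sum.mono_neutral_left) (use assms in auto)

lemma fa_eval_zero: "fa_eval sm fa_zero a = 0"
  by (simp add: fa_eval_def)

lemma fa_eval_add:
  assumes "f \<in> freealg K" "g \<in> freealg K"
  shows "fa_eval sm (fa_add f g) a = fa_eval sm f a + fa_eval sm g a"
proof -
  let ?T = "{w. f w \<noteq> 0} \<union> {w. g w \<noteq> 0}"
  have T: "finite ?T" using assms freealgD by auto
  have "fa_eval sm (fa_add f g) a = (\<Sum>w\<in>?T. sm (f w + g w) (wprod (map a w)))"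
    by (subst fa_eval_superset[OF T]) auto
  also have "\<dots> = fa_eval sm f a + fa_eval sm g a"
    using assms T by (simp add: sm_add_left freealgD sum.distrib fa_eval_superset[of ?T])
  finally show ?thesis .
qed

lemma fa_eval_smult:
  assumes "f \<in> freealg K" "c \<in> K"
  shows "fa_eval sm (fa_smult c f) a = sm c (fa_eval sm f a)"
proof -
  have T: "finite {w. f w \<noteq> 0}" using assms freealgD by auto
  have "fa_eval sm (fa_smult c f) a = (\<Sum>w | f w \<noteq> 0. sm (c * f w) (wprod (map a w)))"
    by (subst fa_eval_superset[OF T]) auto
  then show ?thesis
    using assms by (simp add: sm_mult freealgD sm_sum_right fa_eval_def)
qed

lemma sm_wprod_append:
  assumes "c \<in> K" "d \<in> K" "u \<noteq> []" "v \<noteq> []"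
  shows "sm (c * d) (wprod (map a (u @ v))) = sm c (wprod (map a u)) * sm d (wprod (map a v))"
proof -
  have "sm (c * d) (wprod (map a (u @ v))) = sm c (sm d (wprod (map a u) * wprod (map a v)))"
    using assms by (simp add: wprod_append sm_mult)
  also have "\<dots> = sm c (wprod (map a u) * sm d (wprod (map a v)))"
    by (subst sm_times_right[OF assms(2)]) (rule refl)
  also have "\<dots> = sm c (wprod (map a u)) * sm d (wprod (map a v))"
    by (rule sm_times_left[OF assms(1)])
  finally show ?thesis .
qed

lemma fa_eval_mult:
  assumes f: "f \<in> freealg K" and g: "g \<in> freealg K"
  shows "fa_eval sm (fa_mult f g) a = fa_eval sm f a * fa_eval sm g a"
proof -
  define U where "U = {w. f w \<noteq> 0}"
  define V where "V = {w. g w \<noteq> 0}"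
  define T where "T = (\<lambda>(u, v). u @ v) ` (U \<times> V)"
  define P where "P w = wprod (map a w)" for w
  have UV: "finite U" "finite V" "[] \<notin> U" "[] \<notin> V"
    using f g freealgD by (auto simp: U_def V_def)
  then have T: "finite T" by (simp add: T_def)
  have "fa_eval sm (fa_mult f g) a = (\<Sum>w\<in>T. sm (fa_mult f g w) (P w))"
    using fa_mult_support T unfolding P_def
    by (intro fa_eval_superset) (auto simp: T_def U_def V_def)
  also have "\<dots> = (\<Sum>w\<in>T. \<Sum>i\<in>{1..<length w}. sm (f (take i w) * g (drop i w)) (P w))"
    using f g by (auto simp: fa_mult_def freealgD intro!: sum.cong sm_sum_left)
  also have "\<dots> = (\<Sum>w\<in>T. \<Sum>i\<in>{1..<length w}. if take i w \<in> U \<and> drop i w \<in> V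
      then sm (f (take i w) * g (drop i w)) (P (take i w @ drop i w)) else 0)"
    by (intro sum.cong refl) (auto simp: U_def V_def)
  also have "\<dots> = (\<Sum>(u, v)\<in>U \<times> V. sm (f u * g v) (P (u @ v)))"
    unfolding T_def by (rule sum_splittings_eq_sum_pairs[OF UV])
  also have "\<dots> = (\<Sum>(u, v)\<in>U \<times> V. sm (f u) (P u) * sm (g v) (P v))"
  proof (rule sum.cong)
    fix x assume "x \<in> U \<times> V"
    then obtain u v where "x = (u, v)" "u \<noteq> []" "v \<noteq> []" "f u \<in> K" "g v \<in> K"
      using UV f g freealgD(3) by blast
    then show "(case x of (u, v) \<Rightarrow> sm (f u * g v) (P (u @ v)))
             = (case x of (u, v) \<Rightarrow> sm (f u) (P u) * sm (g v) (P v))"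
      using sm_wprod_append[of "f u" "g v" u v] by (simp add: P_def)
  qed simp
  also have "\<dots> = fa_eval sm f a * fa_eval sm g a"
    by (simp add: fa_eval_def U_def V_def P_def sum_product sum.cartesian_product)
  finally show ?thesis .
qed

lemma Id_alg_is_fa_ideal: "is_fa_ideal K (Id_alg K sm)"
  unfolding is_fa_ideal_def Id_alg_def
  by (auto simp: fa_eval_add fa_eval_smult fa_eval_mult fa_eval_zero)

lemma Id_alg_fa_subspace: "fa_subspace K (Id_alg K sm)"
  by (rule fa_subspace_if_fa_ideal[OF Id_alg_is_fa_ideal])

lemma wprod_scale_var:
  assumes t: "t \<in> K"
  shows "w \<noteq> [] \<Longrightarrow> wprod (map (a(j := sm t (a j))) w) = sm (t ^ count_list w j) (wprod (map a w))"
proof (induction w rule: induct_list012)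
  case (3 x y ys)
  let ?c = "count_list (y # ys) j" and ?p = "wprod (map a (y # ys))"
  have IH: "wprod (map (a(j := sm t (a j))) (y # ys)) = sm (t ^ ?c) ?p" by (rule 3(2)) simp
  let ?a' = "a(j := sm t (a j))"
  have "wprod (map ?a' (x # y # ys)) = ?a' x * sm (t ^ ?c) ?p"
    by (simp only: list.map(2) wprod.simps(3) IH[unfolded list.map(2)])
  also have "\<dots> = sm (t ^ count_list (x # y # ys) j) (wprod (map a (x # y # ys)))"
  proof (cases "x = j")
    case True
    have "sm t (a j) * sm (t ^ ?c) ?p = sm t (a j * sm (t ^ ?c) ?p)"
      using t by (simp only: sm_times_left)
    also have "\<dots> = sm t (sm (t ^ ?c) (a j * ?p))"
      using t by (simp only: sm_times_right[OF K_closed_under(9)[OF t]])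
    also have "\<dots> = sm (t ^ Suc ?c) (a j * ?p)"
      using t by (simp add: sm_mult)
    finally show ?thesis using True by simp
  next
    case False
    have "a x * sm (t ^ ?c) ?p = sm (t ^ ?c) (a x * ?p)"
      using t by (simp add: sm_times_right)
    then show ?thesis using False by simp
  qed
  finally show ?case .
qed auto

lemma fa_scale_var_in [simp]: "f \<in> freealg K \<Longrightarrow> t \<in> K \<Longrightarrow> fa_scale_var j t f \<in> freealg K"
  by (rule freealg_if_support_subset[of "{w. f w \<noteq> 0}"]) (auto simp: fa_scale_var_def freealgD)

lemma fa_eval_scale_var:
  assumes f: "f \<in> freealg K" and t: "t \<in> K"
  shows "fa_eval sm (fa_scale_var j t f) a = fa_eval sm f (a(j := sm t (a j)))"
proof -
  have T: "finite {w. f w \<noteq> 0}" using f freealgD by auto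
  have "fa_eval sm (fa_scale_var j t f) a
      = (\<Sum>w | f w \<noteq> 0. sm (t ^ count_list w j * f w) (wprod (map a w)))"
    by (subst fa_eval_superset[OF T]) (auto simp: fa_scale_var_def)
  also have "\<dots> = (\<Sum>w | f w \<noteq> 0. sm (f w) (wprod (map (a(j := sm t (a j))) w)))"
  proof (rule sum.cong)
    fix w assume "w \<in> {w. f w \<noteq> 0}"
    then have "w \<noteq> []" using freealgD(2)[OF f] by auto
    have "sm (t ^ count_list w j * f w) (wprod (map a w))
        = sm (f w) (sm (t ^ count_list w j) (wprod (map a w)))"
      by (metis K_closed_under(9) freealgD(3) f t mult.commute sm_mult)
    then show "sm (t ^ count_list w j * f w) (wprod (map a w))
        = sm (f w) (wprod (map (a(j := sm t (a j))) w))"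
      using wprod_scale_var[OF t \<open>w \<noteq> []\<close>] by simp
  qed simp
  finally show ?thesis by (simp add: fa_eval_def)
qed

lemma Id_alg_scale_var: "f \<in> Id_alg K sm \<Longrightarrow> t \<in> K \<Longrightarrow> fa_scale_var j t f \<in> Id_alg K sm"
  by (auto simp: Id_alg_def fa_eval_scale_var)

text \<open>Induction on the number of degrees in x_j occurring in f: for a second degree k1,
  the identity (2^(deg_j) - 2^k1) f obtained by substituting 2 x_j lacks degree k1 and has
  the same degree-k part as f up to the factor 2^k - 2^k1.\<close>

lemma Id_alg_restrict_degree:
  "f \<in> Id_alg K sm \<Longrightarrow> fa_restrict (\<lambda>w. count_list w j = k) f \<in> Id_alg K sm"
proof (induction "card ((\<lambda>w. count_list w j) ` {w. f w \<noteq> 0})" arbitrary: f rule: less_induct)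
  case less
  note Id = Id_alg_fa_subspace[unfolded fa_subspace_def]
  define D where "D = (\<lambda>w. count_list w j) ` {w. f w \<noteq> 0}"
  have D: "finite D" using less.prems freealgD by (auto simp: D_def Id_alg_def)
  consider "D \<subseteq> {k}" | k1 where "k1 \<in> D" "k1 \<noteq> k" by blast
  then show ?case
  proof cases
    case 1
    then have "fa_restrict (\<lambda>w. count_list w j = k) f = f" by (auto simp: D_def fun_eq_iff)
    then show ?thesis using less.prems by simp
  next
    case 2
    define g where "g = fa_add (fa_scale_var j 2 f) (fa_smult (- (2 ^ k1)) f)"
    have g: "g \<in> Id_alg K sm" unfolding g_def
      using less.prems Id Id_alg_scale_var by simp
    have gw: "g w = (2 ^ count_list w j - 2 ^ k1) * f w" for w
      by (simp add: g_def fa_scale_var_def algebra_simps)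
    have "(\<lambda>w. count_list w j) ` {w. g w \<noteq> 0} \<subseteq> D - {k1}"
      by (auto simp: gw D_def)
    then have "card ((\<lambda>w. count_list w j) ` {w. g w \<noteq> 0}) < card D"
      using D 2 by (meson card_Diff1_less card_mono finite_Diff order_le_less_trans)
    then have "fa_restrict (\<lambda>w. count_list w j = k) g \<in> Id_alg K sm"
      using less.hyps g by (simp add: D_def)
    moreover have "fa_restrict (\<lambda>w. count_list w j = k) f
        = fa_smult (1 / (2 ^ k - 2 ^ k1)) (fa_restrict (\<lambda>w. count_list w j = k) g)"
      using 2 two_power_eq_iff[of k k1] by (auto simp: gw fun_eq_iff)
    ultimately show ?thesis using Id by simp
  qed
qed

lemma Id_alg_restrict_multidegree:
  assumes "finite J" "f \<in> Id_alg K sm"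
  shows "fa_restrict (\<lambda>w. \<forall>j\<in>J. count_list w j = d j) f \<in> Id_alg K sm"
  using assms(1)
proof (induction J rule: finite_induct)
  case empty
  then show ?case using assms(2) by (simp add: fa_restrict_def)
next
  case (insert j J)
  have "fa_restrict (\<lambda>w. \<forall>i\<in>insert j J. count_list w i = d i) f =
        fa_restrict (\<lambda>w. count_list w j = d j) (fa_restrict (\<lambda>w. \<forall>i\<in>J. count_list w i = d i) f)"
    by (auto simp: fun_eq_iff)
  then show ?case using Id_alg_restrict_degree[OF insert.IH, of j "d j"] by (simp only:)
qed

lemma Id_alg_component:
  assumes f: "f \<in> Id_alg K sm"
  shows "fa_component d f \<in> Id_alg K sm"
proof -
  define J where "J = (\<Union>w\<in>{w. f w \<noteq> 0}. set w)"
  have J: "finite J" using f freealgD by (auto simp: J_def Id_alg_def)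
  have count_0: "count_list w i = 0" if "f w \<noteq> 0" "i \<notin> J" for w i
    using that by (auto simp: J_def count_list_0_iff)
  show ?thesis
  proof (cases "\<exists>i. i \<notin> J \<and> d i \<noteq> 0")
    case True
    then have "fa_component d f = fa_zero"
      by (auto simp: fa_component_def fun_eq_iff) (metis count_0 less_irrefl)
    then show ?thesis using Id_alg_fa_subspace by (simp add: fa_subspace_def)
  next
    case False
    then have "fa_component d f = fa_restrict (\<lambda>w. \<forall>j\<in>J. count_list w j = d j) f"
      using count_0 by (auto simp: fa_component_def fun_eq_iff) (metis count_0)
    then show ?thesis using Id_alg_restrict_multidegree[OF J f] by simp
  qed
qed

lemma Id_alg_component_of_limit:
  assumes N: "is_multihomogeneous_norm K N" and g: "g \<in> freealg K"
    and approx: "\<forall>e>0. \<exists>f\<in>Id_alg K sm. N (fa_diff g f) < e"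
  shows "fa_component d g \<in> Id_alg K sm"
proof -
  interpret fa_normed K N
    using N by unfold_locales (simp add: is_multihomogeneous_norm_def)
  define W where "W = Id_alg K sm \<inter> fa_supported K {w. count_list w = d}"
  have component_in_W: "fa_component d f \<in> W" if "f \<in> Id_alg K sm" for f
    using that Id_alg_component
    by (auto simp: W_def fa_supported_def fa_component_eq_restrict Id_alg_def)
  have "is_fa_closed K N W"
    unfolding W_def
    by (intro fa_subspace_closed_if_finite_support[OF finite_multidegree_class]
        fa_subspace_Int Id_alg_fa_subspace fa_subspace_supported) auto
  moreover have "\<exists>f\<in>W. N (fa_diff (fa_component d g) f) < e" if "e > 0" for e
  proof -
    obtain f where f: "f \<in> Id_alg K sm" "N (fa_diff g f) < e" using approx \<open>e > 0\<close> by blast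
    have "fa_diff (fa_component d g) (fa_component d f) = fa_component d (fa_diff g f)"
      by (rule ext) (simp add: fa_component_eq_restrict)
    moreover have "N (fa_component d (fa_diff g f)) \<le> N (fa_diff g f)"
      using N g f(1) by (simp add: is_multihomogeneous_norm_def Id_alg_def)
    ultimately have "N (fa_diff (fa_component d g) (fa_component d f)) < e"
      using f(2) by simp
    then show ?thesis using component_in_W[OF f(1)] by blast
  qed
  ultimately have "fa_component d g \<in> W"
    using g unfolding is_fa_closed_def by (simp add: fa_component_eq_restrict)
  then show ?thesis by (simp add: W_def)
qed

lemma Id_alg_closed:
  assumes "is_multihomogeneous_norm K N"
  shows "is_fa_closed K N (Id_alg K sm)"
  unfolding is_fa_closed_def
proof (intro ballI impI)
  fix g assume "g \<in> freealg K" and "\<forall>e>0. \<exists>f\<in>Id_alg K sm. N (fa_diff g f) < e"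
  then have "fa_restrict (\<lambda>w. count_list w = d) g \<in> Id_alg K sm" for d
    using Id_alg_component_of_limit[OF assms] by (simp add: fa_component_eq_restrict)
  then show "g \<in> Id_alg K sm"
    using fa_subspace_restrict_partition[OF Id_alg_fa_subspace \<open>g \<in> freealg K\<close>] by blast
qed

end

theorem proposition3p2:
  fixes K :: "complex set" and sm :: "complex \<Rightarrow> 'b::ring \<Rightarrow> 'b"
    and N :: "(nat list \<Rightarrow> complex) \<Rightarrow> real"
  assumes "is_R_or_C K"
    and "is_algebra_over K sm"
    and "is_PI_algebra K sm"
    and "is_MN_norm K N"
  shows "is_fa_ideal K (Id_alg K sm) \<and> is_fa_closed K N (Id_alg K sm)"
proof -
  interpret fa_algebra K sm
    using assms(1,2) by unfold_locales
  have "is_multihomogeneous_norm K N"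
    using assms(4) by (simp add: is_MN_norm_def)
  then show ?thesis using Id_alg_is_fa_ideal Id_alg_closed by blast
qed

end
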